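(* Let $1\le m\le k$, let $v_0,\pi_1,v_1,\dots,\pi_k$ be generated by Approximate Value Iteration with errors $\epsilon_1,\dots,\epsilon_{k-1}$, let $\epsilon_\infty=\max_{1\le j<k}\|\epsilon_j\|_\infty$, and let $\pi_{k,m}$ be the periodic non-stationary policy $\pi_k\,\pi_{k-1}\cdots\pi_{k-m+1}\,\pi_k\cdots\pi_{k-m+1}\cdots$. Then $$\|T_{\pi_k}v_{k-1}-v_{\pi_{k,m}}\|_\infty\le \gamma^m\|v_{k-m}-v_{\pi_{k,m}}\|_\infty+\frac{\gamma-\gamma^m}{1-\gamma}\,\epsilon_\infty.$$
   Context: A Markov Decision Process with finite state space $S$, finite action space $A$, reward $r(s,a)$, transitions $p(s'|s,a)$, discount $\gamma\in[0,1)$. For a policy $\pi:S\to A$, $r_\pi(s)=r(s,\pi(s))$, $P_\pi(s,s')=p(s'|s,\pi(s))$, and $T_\pi v=r_\pi+\gamma P_\pi v$. The Bellman optimality operator is $Tv=\max_\pi T_\pi v$, and $\pi$ is greedy w.r.t. $v$ if $T_\pi v=Tv$. Approximate Value Iteration: from arbitrary $v_0$, for $j\ge0$ pick any $\pi_{j+1}$ greedy w.r.t. $v_j$ and set $v_{j+1}=T_{\pi_{j+1}}v_j+\epsilon_{j+1}$ with arbitrary errors $\epsilon_{j+1}:S\to\mathbb R$. A non-stationary policy $\sigma_0\sigma_1\cdots$ uses $\sigma_t$ at time $t$, with value $\sum_{t\ge0}\gamma^t P_{\sigma_0}\cdots P_{\sigma_{t-1}}r_{\sigma_t}$. *)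

theory Defs
  imports Complex_Main
begin

text \<open>Finite MDP: states of finite type 's, actions of finite type 'a,
  reward r s a, transition probability p s a s' = p(s'|s,a), discount gamma.\<close>

definition r_pol :: "('s \<Rightarrow> 'a \<Rightarrow> real) \<Rightarrow> ('s \<Rightarrow> 'a) \<Rightarrow> 's \<Rightarrow> real" where
  "r_pol r \<pi> = (\<lambda>s. r s (\<pi> s))"

definition P_pol :: "('s::finite \<Rightarrow> 'a \<Rightarrow> 's \<Rightarrow> real) \<Rightarrow> ('s \<Rightarrow> 'a) \<Rightarrow> ('s \<Rightarrow> real) \<Rightarrow> 's \<Rightarrow> real" where
  "P_pol p \<pi> v = (\<lambda>s. \<Sum>s'\<in>UNIV. p s (\<pi> s) s' * v s')"

definition T_pol :: "('s::finite \<Rightarrow> 'a \<Rightarrow> real) \<Rightarrow> ('s \<Rightarrow> 'a \<Rightarrow> 's \<Rightarrow> real) \<Rightarrow> real \<Rightarrow> ('s \<Rightarrow> 'a) \<Rightarrow> ('s \<Rightarrow> real) \<Rightarrow> 's \<Rightarrow> real" where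
  "T_pol r p \<gamma> \<pi> v = (\<lambda>s. r_pol r \<pi> s + \<gamma> * P_pol p \<pi> v s)"

definition T_opt :: "('s::finite \<Rightarrow> 'a::finite \<Rightarrow> real) \<Rightarrow> ('s \<Rightarrow> 'a \<Rightarrow> 's \<Rightarrow> real) \<Rightarrow> real \<Rightarrow> ('s \<Rightarrow> real) \<Rightarrow> 's \<Rightarrow> real" where
  "T_opt r p \<gamma> v = (\<lambda>s. Max ((\<lambda>\<pi>. T_pol r p \<gamma> \<pi> v s) ` UNIV))"

definition greedy :: "('s::finite \<Rightarrow> 'a::finite \<Rightarrow> real) \<Rightarrow> ('s \<Rightarrow> 'a \<Rightarrow> 's \<Rightarrow> real) \<Rightarrow> real \<Rightarrow> ('s \<Rightarrow> 'a) \<Rightarrow> ('s \<Rightarrow> real) \<Rightarrow> bool" where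
  "greedy r p \<gamma> \<pi> v \<longleftrightarrow> T_pol r p \<gamma> \<pi> v = T_opt r p \<gamma> v"

fun P_prod :: "('s::finite \<Rightarrow> 'a \<Rightarrow> 's \<Rightarrow> real) \<Rightarrow> (nat \<Rightarrow> 's \<Rightarrow> 'a) \<Rightarrow> nat \<Rightarrow> ('s \<Rightarrow> real) \<Rightarrow> 's \<Rightarrow> real" where
  "P_prod p \<sigma> 0 w = w"
| "P_prod p \<sigma> (Suc t) w = P_pol p (\<sigma> 0) (P_prod p (\<lambda>i. \<sigma> (Suc i)) t w)"

definition v_ns :: "('s::finite \<Rightarrow> 'a \<Rightarrow> real) \<Rightarrow> ('s \<Rightarrow> 'a \<Rightarrow> 's \<Rightarrow> real) \<Rightarrow> real \<Rightarrow> (nat \<Rightarrow> 's \<Rightarrow> 'a) \<Rightarrow> 's \<Rightarrow> real" where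
  "v_ns r p \<gamma> \<sigma> = (\<lambda>s. \<Sum>t. \<gamma> ^ t * P_prod p \<sigma> t (r_pol r (\<sigma> t)) s)"

definition supnorm :: "('s::finite \<Rightarrow> real) \<Rightarrow> real" where
  "supnorm v = Max (range (\<lambda>s. \<bar>v s\<bar>))"

end

theory Submission
  imports Defs
begin

(* Write sigma = pi_{k,m}; since sigma has period
   m, its value satisfies the cyclic Bellman equations
     v(shift_{m-1-i} sigma) = T_{pi_{k-m+1+i}} v(shift_{m-i} sigma),   shift_m sigma = sigma.
   So v_sigma is obtained from itself by m exact applications of the operators
   T_{pi_{k-m+1}}, ..., T_{pi_k}, while v_{k-1} is obtained from v_{k-m} by the same operators
   (except the last) up to additive errors of size at most epsilon_inf.  As every T_pi is a
   gamma-contraction in the sup norm, comparing an exact with a perturbed iteration along the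
   same chain of operators loses a factor gamma per step and accumulates the errors
   geometrically: gamma + ... + gamma^(m-1) = (gamma - gamma^m)/(1 - gamma). *)

lemma abs_le_supnorm: "\<bar>f s\<bar> \<le> supnorm f"
  unfolding supnorm_def by (rule Max_ge) auto

lemma supnorm_leI: "(\<And>s. \<bar>f s\<bar> \<le> B) \<Longrightarrow> supnorm (f :: 's::finite \<Rightarrow> real) \<le> B"
  unfolding supnorm_def by (subst Max_le_iff) auto

lemma supnorm_triangle:
  "supnorm (\<lambda>s. a s - c s) \<le> supnorm (\<lambda>s. a s - b s) + supnorm (\<lambda>s. b s - (c s :: real))"
proof (rule supnorm_leI)
  fix s
  have "\<bar>a s - c s\<bar> \<le> \<bar>a s - b s\<bar> + \<bar>b s - c s\<bar>" by linarith
  also have "\<dots> \<le> supnorm (\<lambda>s. a s - b s) + supnorm (\<lambda>s. b s - c s)"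
    by (intro add_mono abs_le_supnorm[where f="\<lambda>s. _ s - _ s", simplified])
  finally show "\<bar>a s - c s\<bar> \<le> supnorm (\<lambda>s. a s - b s) + supnorm (\<lambda>s. b s - c s)" .
qed

lemma P_pol_bounded:
  assumes p_nonneg: "\<And>s a s'. p s a s' \<ge> 0" and p_sum: "\<And>s a. (\<Sum>s'\<in>UNIV. p s a s') = 1"
    and w: "\<And>s. \<bar>w s\<bar> \<le> B"
  shows "\<bar>P_pol p \<pi> w s\<bar> \<le> B"
proof -
  have "\<bar>P_pol p \<pi> w s\<bar> \<le> (\<Sum>s'\<in>UNIV. \<bar>p s (\<pi> s) s' * w s'\<bar>)"
    unfolding P_pol_def by (rule sum_abs)
  also have "\<dots> \<le> (\<Sum>s'\<in>UNIV. p s (\<pi> s) s' * B)"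
    by (rule sum_mono) (simp add: abs_mult p_nonneg mult_left_mono w)
  also have "\<dots> = B" using p_sum by (simp add: sum_distrib_right[symmetric])
  finally show ?thesis .
qed

lemma P_prod_bounded:
  assumes p_nonneg: "\<And>s a s'. p s a s' \<ge> 0" and p_sum: "\<And>s a. (\<Sum>s'\<in>UNIV. p s a s') = 1"
    and w: "\<And>s. \<bar>w s\<bar> \<le> B"
  shows "\<bar>P_prod p \<sigma> t w s\<bar> \<le> B"
proof (induction t arbitrary: \<sigma> s)
  case 0 show ?case using w by simp
next
  case (Suc t) then show ?case by (simp add: P_pol_bounded[OF p_nonneg p_sum])
qed

lemma T_pol_diff: "T_pol r p \<gamma> \<pi> a s - T_pol r p \<gamma> \<pi> b s = \<gamma> * P_pol p \<pi> (\<lambda>x. a x - b x) s"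
  unfolding T_pol_def P_pol_def by (simp add: algebra_simps sum_subtractf)

lemma T_pol_contraction:
  assumes p_nonneg: "\<And>s a s'. p s a s' \<ge> 0" and p_sum: "\<And>s a. (\<Sum>s'\<in>UNIV. p s a s') = 1"
    and gamma: "0 \<le> \<gamma>"
  shows "supnorm (\<lambda>s. T_pol r p \<gamma> \<pi> a s - T_pol r p \<gamma> \<pi> b s) \<le> \<gamma> * supnorm (\<lambda>s. a s - b s)"
proof (rule supnorm_leI)
  fix s
  have "\<bar>P_pol p \<pi> (\<lambda>x. a x - b x) s\<bar> \<le> supnorm (\<lambda>s. a s - b s)"
    by (rule P_pol_bounded[OF p_nonneg p_sum]) (rule abs_le_supnorm)
  then show "\<bar>T_pol r p \<gamma> \<pi> a s - T_pol r p \<gamma> \<pi> b s\<bar> \<le> \<gamma> * supnorm (\<lambda>s. a s - b s)"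
    unfolding T_pol_diff using gamma by (simp add: abs_mult mult_left_mono)
qed

text \<open>The series defining the value of a non-stationary policy converges absolutely,
  dominated by a geometric series, since rewards are bounded on the finite state-action space.\<close>
lemma v_ns_summable:
  fixes r :: "'s::finite \<Rightarrow> 'a::finite \<Rightarrow> real"
  assumes p_nonneg: "\<And>s a s'. p s a s' \<ge> 0" and p_sum: "\<And>s a. (\<Sum>s'\<in>UNIV. p s a s') = 1"
    and gamma: "0 \<le> \<gamma>" "\<gamma> < 1"
  shows "summable (\<lambda>t. \<gamma> ^ t * P_prod p \<sigma> t (r_pol r (\<sigma> t)) s)"
proof (rule summable_comparison_test')
  define B where "B = (\<Sum>x\<in>UNIV. \<Sum>a\<in>UNIV. \<bar>r x a\<bar>)"
  have r_bounded: "\<bar>r_pol r \<pi> x\<bar> \<le> B" for \<pi> x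
  proof -
    have "\<bar>r x (\<pi> x)\<bar> \<le> (\<Sum>a\<in>UNIV. \<bar>r x a\<bar>)" by (rule member_le_sum) auto
    also have "\<dots> \<le> B"
      unfolding B_def by (rule member_le_sum[where f="\<lambda>x. \<Sum>a\<in>UNIV. \<bar>r x a\<bar>"]) (auto intro: sum_nonneg)
    finally show ?thesis by (simp add: r_pol_def)
  qed
  show "summable (\<lambda>t. \<gamma> ^ t * B)"
    using gamma by (intro summable_mult2 summable_geometric) auto
  show "norm (\<gamma> ^ t * P_prod p \<sigma> t (r_pol r (\<sigma> t)) s) \<le> \<gamma> ^ t * B" for t
    using P_prod_bounded[OF p_nonneg p_sum r_bounded[of "\<sigma> t"], where \<sigma>=\<sigma> and t=t and s=s] gamma
    by (simp add: abs_mult mult_left_mono)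
qed

text \<open>The value of \<open>\<sigma>\<^sub>0 \<sigma>\<^sub>1 \<sigma>\<^sub>2 \<dots>\<close> is \<open>T\<^bsub>\<sigma>\<^sub>0\<^esub>\<close> applied to the value of
  the shifted policy \<open>\<sigma>\<^sub>1 \<sigma>\<^sub>2 \<dots>\<close>: split off the first term of the series and
  exchange the remaining series with the finite sum defining \<open>P\<^bsub>\<sigma>\<^sub>0\<^esub>\<close>.\<close>
lemma v_ns_Bellman:
  fixes r :: "'s::finite \<Rightarrow> 'a::finite \<Rightarrow> real"
  assumes p_nonneg: "\<And>s a s'. p s a s' \<ge> 0" and p_sum: "\<And>s a. (\<Sum>s'\<in>UNIV. p s a s') = 1"
    and gamma: "0 \<le> \<gamma>" "\<gamma> < 1"
  shows "v_ns r p \<gamma> \<sigma> = T_pol r p \<gamma> (\<sigma> 0) (v_ns r p \<gamma> (\<lambda>i. \<sigma> (Suc i)))"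
proof
  fix s
  note summable = v_ns_summable[OF p_nonneg p_sum gamma, where r=r]
  define \<sigma>' where "\<sigma>' = (\<lambda>i. \<sigma> (Suc i))"
  define f where "f = (\<lambda>t. \<gamma> ^ t * P_prod p \<sigma> t (r_pol r (\<sigma> t)) s)"
  define g where "g = (\<lambda>x t. p s (\<sigma> 0 s) x * (\<gamma> ^ t * P_prod p \<sigma>' t (r_pol r (\<sigma>' t)) x))"
  have g_summable: "summable (g x)" for x
    unfolding g_def by (intro summable_mult summable)
  have f_Suc: "f (Suc t) = \<gamma> * (\<Sum>x\<in>UNIV. g x t)" for t
    unfolding f_def g_def \<sigma>'_def by (simp add: P_pol_def sum_distrib_left algebra_simps)
  have "v_ns r p \<gamma> \<sigma> s = f 0 + (\<Sum>t. f (Suc t))"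
    using suminf_split_head[OF summable[where \<sigma>=\<sigma> and s=s]] unfolding v_ns_def f_def by simp
  also have "(\<Sum>t. f (Suc t)) = \<gamma> * (\<Sum>t. \<Sum>x\<in>UNIV. g x t)"
    unfolding f_Suc by (intro suminf_mult summable_sum g_summable)
  also have "(\<Sum>t. \<Sum>x\<in>UNIV. g x t) = (\<Sum>x\<in>UNIV. \<Sum>t. g x t)"
    by (intro suminf_sum g_summable)
  also have "\<dots> = (\<Sum>x\<in>UNIV. p s (\<sigma> 0 s) x * v_ns r p \<gamma> \<sigma>' x)"
    unfolding g_def by (intro sum.cong refl, subst suminf_mult) (auto simp: v_ns_def summable)
  finally show "v_ns r p \<gamma> \<sigma> s = T_pol r p \<gamma> (\<sigma> 0) (v_ns r p \<gamma> \<sigma>') s"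
    unfolding T_pol_def P_pol_def f_def by simp
qed

lemma perturbed_iteration_bound:
  assumes p_nonneg: "\<And>s a s'. p s a s' \<ge> 0" and p_sum: "\<And>s a. (\<Sum>s'\<in>UNIV. p s a s') = 1"
    and gamma: "0 \<le> \<gamma>" "\<gamma> < 1"
    and exact: "\<And>i. i \<le> n \<Longrightarrow> V (Suc i) = T_pol r p \<gamma> (\<rho> (Suc i)) (V i)"
    and perturbed: "\<And>i. i < n \<Longrightarrow>
          supnorm (\<lambda>s. u (Suc i) s - T_pol r p \<gamma> (\<rho> (Suc i)) (u i) s) \<le> E"
  shows "supnorm (\<lambda>s. T_pol r p \<gamma> (\<rho> (Suc n)) (u n) s - V (Suc n) s)
           \<le> \<gamma> ^ Suc n * supnorm (\<lambda>s. u 0 s - V 0 s) + (\<gamma> - \<gamma> ^ Suc n) / (1 - \<gamma>) * E"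
  using exact perturbed
proof (induction n)
  case 0
  then show ?case
    using T_pol_contraction[OF p_nonneg p_sum gamma(1), where r=r and \<pi>="\<rho> 1" and a="u 0" and b="V 0"] by simp
next
  case (Suc n)
  define N where "N = supnorm (\<lambda>s. u 0 s - V 0 s)"
  define T where "T = T_pol r p \<gamma> (\<rho> (Suc (Suc n)))"
  have IH: "supnorm (\<lambda>s. T_pol r p \<gamma> (\<rho> (Suc n)) (u n) s - V (Suc n) s)
              \<le> \<gamma> ^ Suc n * N + (\<gamma> - \<gamma> ^ Suc n) / (1 - \<gamma>) * E"
    unfolding N_def using Suc by simp
  have "supnorm (\<lambda>s. T (u (Suc n)) s - V (Suc (Suc n)) s)
          \<le> \<gamma> * supnorm (\<lambda>s. u (Suc n) s - V (Suc n) s)"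
    unfolding Suc.prems(1)[OF order.refl] T_def by (rule T_pol_contraction[OF p_nonneg p_sum gamma(1)])
  also have "\<dots> \<le> \<gamma> * (E + (\<gamma> ^ Suc n * N + (\<gamma> - \<gamma> ^ Suc n) / (1 - \<gamma>) * E))"
    using supnorm_triangle[where a="u (Suc n)" and b="T_pol r p \<gamma> (\<rho> (Suc n)) (u n)" and c="V (Suc n)"]
      Suc.prems(2)[of n] IH gamma(1)
    by (intro mult_left_mono) auto
  also have "\<dots> = \<gamma> ^ Suc (Suc n) * N + (\<gamma> - \<gamma> ^ Suc (Suc n)) / (1 - \<gamma>) * E"
    using gamma(2) by (simp add: field_simps)
  finally show ?case unfolding N_def T_def .
qed

lemma periodic_policy_Bellman:
  fixes r :: "'s::finite \<Rightarrow> 'a::finite \<Rightarrow> real"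
  assumes p_nonneg: "\<And>s a s'. p s a s' \<ge> 0" and p_sum: "\<And>s a. (\<Sum>s'\<in>UNIV. p s a s') = 1"
    and gamma: "0 \<le> \<gamma>" "\<gamma> < 1"
    and i: "i < m" and m: "m \<le> k"
  shows "v_ns r p \<gamma> (\<lambda>t. \<pi> (k - (t + (m - Suc i)) mod m))
       = T_pol r p \<gamma> (\<pi> (k - m + Suc i)) (v_ns r p \<gamma> (\<lambda>t. \<pi> (k - (t + (m - i)) mod m)))"
proof -
  have first: "k - (m - Suc i) mod m = k - m + Suc i" using i m by simp
  have shift: "(\<lambda>t. \<pi> (k - (Suc t + (m - Suc i)) mod m)) = (\<lambda>t. \<pi> (k - (t + (m - i)) mod m))"
    using i by (simp add: Suc_diff_Suc)
  show ?thesis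
    using v_ns_Bellman[OF p_nonneg p_sum gamma, where r=r and \<sigma>="\<lambda>t. \<pi> (k - (t + (m - Suc i)) mod m)"]
    unfolding shift by (simp add: first)
qed

theorem mainTheorem6:
  fixes r :: "'s::finite \<Rightarrow> 'a::finite \<Rightarrow> real"
    and p :: "'s \<Rightarrow> 'a \<Rightarrow> 's \<Rightarrow> real"
    and \<gamma> :: real
    and v :: "nat \<Rightarrow> 's \<Rightarrow> real"
    and \<pi> :: "nat \<Rightarrow> 's \<Rightarrow> 'a"
    and \<epsilon> :: "nat \<Rightarrow> 's \<Rightarrow> real"
    and k m :: nat
  assumes p_nonneg: "\<And>s a s'. p s a s' \<ge> 0"
    and p_sum: "\<And>s a. (\<Sum>s'\<in>UNIV. p s a s') = 1"
    and gamma: "0 \<le> \<gamma>" "\<gamma> < 1"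
    and m: "1 \<le> m" "m \<le> k"
    and greedy_step: "\<And>j. j < k \<Longrightarrow> greedy r p \<gamma> (\<pi> (Suc j)) (v j)"
    and avi_step: "\<And>j. Suc j < k \<Longrightarrow> v (Suc j) = (\<lambda>s. T_pol r p \<gamma> (\<pi> (Suc j)) (v j) s + \<epsilon> (Suc j) s)"
  shows "let \<epsilon>inf = Max (insert 0 ((\<lambda>j. supnorm (\<epsilon> j)) ` {1..<k}));
             \<pi>km = (\<lambda>t. \<pi> (k - t mod m));
             vkm = v_ns r p \<gamma> \<pi>km
         in supnorm (\<lambda>s. T_pol r p \<gamma> (\<pi> k) (v (k - 1)) s - vkm s)
            \<le> \<gamma> ^ m * supnorm (\<lambda>s. v (k - m) s - vkm s) + (\<gamma> - \<gamma> ^ m) / (1 - \<gamma>) * \<epsilon>inf"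
proof -
  define E where "E = Max (insert 0 ((\<lambda>j. supnorm (\<epsilon> j)) ` {1..<k}))"
  text \<open>Exact chain: values of the shifts of the periodic policy; perturbed chain: the
    AVI iterates \<open>v (k - m + i)\<close>; operators: those of \<open>\<pi> (k - m + i)\<close>.\<close>
  define V where "V = (\<lambda>i. v_ns r p \<gamma> (\<lambda>t. \<pi> (k - (t + (m - i)) mod m)))"
  obtain n where n: "m = Suc n" using m(1) by (cases m) auto
  have "supnorm (\<lambda>s. T_pol r p \<gamma> (\<pi> (k - m + Suc n)) (v (k - m + n)) s - V (Suc n) s)
          \<le> \<gamma> ^ Suc n * supnorm (\<lambda>s. v (k - m + 0) s - V 0 s) + (\<gamma> - \<gamma> ^ Suc n) / (1 - \<gamma>) * E"
  proof (rule perturbed_iteration_bound[OF p_nonneg p_sum gamma])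
    show "V (Suc i) = T_pol r p \<gamma> (\<pi> (k - m + Suc i)) (V i)" if "i \<le> n" for i
      unfolding V_def using periodic_policy_Bellman[OF p_nonneg p_sum gamma _ m(2), where r=r and \<pi>=\<pi> and i=i] that n by simp
    show "supnorm (\<lambda>s. v (k - m + Suc i) s - T_pol r p \<gamma> (\<pi> (k - m + Suc i)) (v (k - m + i)) s) \<le> E"
      if "i < n" for i
    proof -
      have "v (k - m + Suc i) = (\<lambda>s. T_pol r p \<gamma> (\<pi> (k - m + Suc i)) (v (k - m + i)) s + \<epsilon> (k - m + Suc i) s)"
        using avi_step[of "k - m + i"] that n m(2) by simp
      moreover have "supnorm (\<epsilon> (k - m + Suc i)) \<le> E"
        unfolding E_def using that n m(2) by (intro Max_ge) auto
      ultimately show ?thesis by simp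
    qed
  qed
  moreover have "V 0 = v_ns r p \<gamma> (\<lambda>t. \<pi> (k - t mod m))" "V m = V 0"
    unfolding V_def by simp_all
  ultimately show ?thesis
    unfolding Let_def E_def using m n by (simp add: Suc_diff_le)
qed

end
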